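(* Let $G=(V,E)$ be a node-symmetric graph and let $(q_J)_{J\in\{0,1\}^V}$ be a probability distribution on channel state vectors such that $q_J=q_K$ whenever the induced subgraphs $G_J$ and $G_K$ are isomorphic. Then the probability that the channel state is $1$ at node $a$, namely $\sum_{J:J_a=1}q_J$, is the same for all $a\in V$.
   Context: A channel state vector $J\in\{0,1\}^V$ gives the state ($1$ = available, $0$ = unavailable) of a primary's channel at each node; $G_J$ is the subgraph of $G$ induced by $\{a\in V: J_a=1\}$. $G$ is node symmetric (vertex transitive) if for all $a,b\in V$ there is an automorphism $F$ of $G$ (a bijection $V\to V$ preserving adjacency in both directions) with $F(a)=b$. Graphs $H,H'$ are isomorphic if there is a bijection between their vertex sets preserving adjacency in both directions. *)

theory Defs
  imports Complex_Main
begin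

definition simple_graph :: "'a set \<Rightarrow> ('a \<Rightarrow> 'a \<Rightarrow> bool) \<Rightarrow> bool" where
  "simple_graph V E \<longleftrightarrow> finite V \<and> (\<forall>a b. E a b \<longrightarrow> a \<in> V \<and> b \<in> V)
     \<and> (\<forall>a b. E a b \<longrightarrow> E b a) \<and> (\<forall>a. \<not> E a a)"

definition automorphism :: "'a set \<Rightarrow> ('a \<Rightarrow> 'a \<Rightarrow> bool) \<Rightarrow> ('a \<Rightarrow> 'a) \<Rightarrow> bool" where
  "automorphism V E F \<longleftrightarrow> bij_betw F V V \<and> (\<forall>a\<in>V. \<forall>b\<in>V. E a b \<longleftrightarrow> E (F a) (F b))"

definition node_symmetric :: "'a set \<Rightarrow> ('a \<Rightarrow> 'a \<Rightarrow> bool) \<Rightarrow> bool" where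
  "node_symmetric V E \<longleftrightarrow> (\<forall>a\<in>V. \<forall>b\<in>V. \<exists>F. automorphism V E F \<and> F a = b)"

definition graph_iso :: "'a set \<Rightarrow> ('a \<Rightarrow> 'a \<Rightarrow> bool) \<Rightarrow> 'b set \<Rightarrow> ('b \<Rightarrow> 'b \<Rightarrow> bool) \<Rightarrow> bool" where
  "graph_iso V1 E1 V2 E2 \<longleftrightarrow> (\<exists>f. bij_betw f V1 V2 \<and> (\<forall>a\<in>V1. \<forall>b\<in>V1. E1 a b \<longleftrightarrow> E2 (f a) (f b)))"

text \<open>Channel state vectors J \<in> {0,1}^V, represented as Boolean functions on V
(True = available), extensional outside V.\<close>
definition states :: "'a set \<Rightarrow> ('a \<Rightarrow> bool) set" where
  "states V = {J. \<forall>x. x \<notin> V \<longrightarrow> \<not> J x}"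

text \<open>Vertex set of the induced subgraph G_J; its edges are E restricted to it.\<close>
definition active :: "'a set \<Rightarrow> ('a \<Rightarrow> bool) \<Rightarrow> 'a set" where
  "active V J = {a \<in> V. J a}"

definition induced_iso :: "'a set \<Rightarrow> ('a \<Rightarrow> 'a \<Rightarrow> bool) \<Rightarrow> ('a \<Rightarrow> bool) \<Rightarrow> ('a \<Rightarrow> bool) \<Rightarrow> bool" where
  "induced_iso V E J K \<longleftrightarrow>
     graph_iso (active V J) (\<lambda>a b. a \<in> active V J \<and> b \<in> active V J \<and> E a b)
               (active V K) (\<lambda>a b. a \<in> active V K \<and> b \<in> active V K \<and> E a b)"

end

theory Submission
  imports Defs
begin

text \<open>An automorphism F with F a = b acts on channel states by J \<mapsto> J \<circ> F. This action is a
bijection of the states that are available at b onto those available at a, and J \<circ> F has an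
induced subgraph isomorphic to that of J (via F itself). Since q is constant on isomorphism
classes of induced subgraphs, reindexing the sum along the action gives the claim.\<close>

definition pullback_state :: "'a set \<Rightarrow> ('a \<Rightarrow> 'a) \<Rightarrow> ('a \<Rightarrow> bool) \<Rightarrow> 'a \<Rightarrow> bool" where
  "pullback_state V F J = (\<lambda>x. x \<in> V \<and> J (F x))"

lemma pullback_state_in_states: "pullback_state V F J \<in> states V"
  by (simp add: pullback_state_def states_def)

lemma pullback_state_id: "J \<in> states V \<Longrightarrow> pullback_state V id J = J"
  by (auto simp: pullback_state_def states_def fun_eq_iff)

lemma pullback_state_cong: "(\<And>x. x \<in> V \<Longrightarrow> F x = G x) \<Longrightarrow> pullback_state V F J = pullback_state V G J"
  by (auto simp: pullback_state_def fun_eq_iff)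

lemma pullback_state_pullback_state:
  assumes "G ` V \<subseteq> V"
  shows "pullback_state V G (pullback_state V F J) = pullback_state V (F \<circ> G) J"
  using assms by (auto simp: pullback_state_def fun_eq_iff)

lemma bij_betw_pullback_state:
  assumes F: "bij_betw F V V" and "a \<in> V"
  shows "bij_betw (pullback_state V F) {J \<in> states V. J (F a)} {J \<in> states V. J a}"
proof -
  let ?G = "inv_into V F"
  have FV: "F ` V \<subseteq> V" and GV: "?G ` V \<subseteq> V"
    using F by (auto simp: bij_betw_def inv_into_into)
  have FG: "\<And>x. x \<in> V \<Longrightarrow> (F \<circ> ?G) x = id x" and GF: "\<And>x. x \<in> V \<Longrightarrow> (?G \<circ> F) x = id x"
    using F by (auto simp: bij_betw_inv_into_right bij_betw_inv_into_left)
  have back_forth: "pullback_state V ?G (pullback_state V F J) = J" if "J \<in> states V" for J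
  proof -
    have "pullback_state V ?G (pullback_state V F J) = pullback_state V (F \<circ> ?G) J"
      by (rule pullback_state_pullback_state[OF GV])
    also have "\<dots> = pullback_state V id J"
      by (rule pullback_state_cong[OF FG])
    finally show ?thesis
      using pullback_state_id[OF that] by simp
  qed
  have forth_back: "pullback_state V F (pullback_state V ?G J) = J" if "J \<in> states V" for J
  proof -
    have "pullback_state V F (pullback_state V ?G J) = pullback_state V (?G \<circ> F) J"
      by (rule pullback_state_pullback_state[OF FV])
    also have "\<dots> = pullback_state V id J"
      by (rule pullback_state_cong[OF GF])
    finally show ?thesis
      using pullback_state_id[OF that] by simp
  qed
  show ?thesis
  proof (rule bij_betw_byWitness[where f' = "pullback_state V ?G"])
    show "pullback_state V F ` {J \<in> states V. J (F a)} \<subseteq> {J \<in> states V. J a}"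
      using \<open>a \<in> V\<close> pullback_state_in_states by (auto simp: pullback_state_def)
    show "pullback_state V ?G ` {J \<in> states V. J a} \<subseteq> {J \<in> states V. J (F a)}"
      using \<open>a \<in> V\<close> FV GF pullback_state_in_states by (auto simp: pullback_state_def)
  qed (use back_forth forth_back in auto)
qed

lemma induced_iso_pullback_state:
  assumes "automorphism V E F"
  shows "induced_iso V E (pullback_state V F J) J"
proof -
  have F: "bij_betw F V V" and adj: "\<forall>x\<in>V. \<forall>y\<in>V. E x y \<longleftrightarrow> E (F x) (F y)"
    using assms by (auto simp: automorphism_def)
  then have FV: "\<And>x. x \<in> V \<Longrightarrow> F x \<in> V"
    by (auto simp: bij_betw_def)
  have active_pullback: "active V (pullback_state V F J) = {x \<in> V. J (F x)}"
    by (auto simp: active_def pullback_state_def)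
  have "F ` {x \<in> V. J (F x)} = active V J"
  proof
    show "F ` {x \<in> V. J (F x)} \<subseteq> active V J"
      using FV by (auto simp: active_def)
    show "active V J \<subseteq> F ` {x \<in> V. J (F x)}"
    proof
      fix y assume "y \<in> active V J"
      then obtain x where "x \<in> V" "y = F x"
        using F by (auto simp: active_def bij_betw_def)
      with \<open>y \<in> active V J\<close> show "y \<in> F ` {x \<in> V. J (F x)}"
        by (auto simp: active_def)
    qed
  qed
  then have "bij_betw F (active V (pullback_state V F J)) (active V J)"
    unfolding active_pullback by (rule bij_betw_subset[OF F, rotated]) auto
  moreover have "E x y \<longleftrightarrow> E (F x) (F y)"
    if "x \<in> active V (pullback_state V F J)" "y \<in> active V (pullback_state V F J)" for x y
    using adj that by (simp add: active_pullback)
  ultimately show ?thesis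
    unfolding induced_iso_def graph_iso_def
    by (intro exI[of _ F] conjI) (auto simp: active_pullback active_def pullback_state_def FV)
qed

theorem lemma11:
  fixes V :: "'a set" and E :: "'a \<Rightarrow> 'a \<Rightarrow> bool" and q :: "('a \<Rightarrow> bool) \<Rightarrow> real"
  assumes "simple_graph V E"
    and "node_symmetric V E"
    and "\<forall>J\<in>states V. q J \<ge> 0"
    and "(\<Sum>J\<in>states V. q J) = 1"
    and "\<forall>J\<in>states V. \<forall>K\<in>states V. induced_iso V E J K \<longrightarrow> q J = q K"
    and "a \<in> V" and "b \<in> V"
  shows "(\<Sum>J\<in>{J\<in>states V. J a}. q J) = (\<Sum>J\<in>{J\<in>states V. J b}. q J)"
proof -
  obtain F where aut: "automorphism V E F" and "F a = b"
    using assms(2,6,7) unfolding node_symmetric_def by blast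
  then have bij: "bij_betw (pullback_state V F) {J \<in> states V. J b} {J \<in> states V. J a}"
    using bij_betw_pullback_state[OF _ \<open>a \<in> V\<close>] by (auto simp: automorphism_def)
  have invariant: "q (pullback_state V F J) = q J" if "J \<in> states V" for J
    using assms(5) that pullback_state_in_states induced_iso_pullback_state[OF aut] by blast
  have "(\<Sum>J\<in>{J\<in>states V. J a}. q J) = (\<Sum>J\<in>{J\<in>states V. J b}. q (pullback_state V F J))"
    using sum.reindex_bij_betw[OF bij, of q] by simp
  also have "\<dots> = (\<Sum>J\<in>{J\<in>states V. J b}. q J)"
    using invariant by simp
  finally show ?thesis .
qed

end
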